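(* Let $K\subset\mathbf{R}^d$ ($d\ge1$) be a convex compact subset, $T:\mathscr{C}(K)\to\mathscr{C}(K)$ a Markov operator such that $T(h)=h$ for every continuous affine function $h$ on $K$, $a\ge0$, and $(\mu_n)_{n\ge1}$ a sequence of Borel probability measures on $K$. Then for every $f\in\mathscr{C}(K)$, $n\ge1$ and $x\in K$, $$|C_n(f)(x)-f(x)|\le 2\,\omega\Big(f,\frac{1}{n+a}\sqrt{a^2\int_K d_x^2\,d\mu_n+n\big(T(e_2)(x)-e_2(x)\big)}\Big).$$ Moreover, $$\|C_n(f)-f\|_\infty\le 2\,\omega\Big(f,\sqrt{\frac{\max\big(a\,\mathrm{diam}(K)^2,\ \|T(e_2)-e_2\|_\infty\big)}{n+a}}\Big),$$ where $\mathrm{diam}(K)=\sup\{\|x-y\|_2:x,y\in K\}$.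
   Context: A Markov operator is a positive linear operator $T$ on $\mathscr{C}(K)$ with $T(\mathbf{1})=\mathbf{1}$; $(\tilde\mu_x^T)_{x\in K}$ are the Borel probability measures with $\int_K f\,d\tilde\mu_x^T=T(f)(x)$. $C_n(f)(x)=\int_K\cdots\int_K f\big(\frac{x_1+\dots+x_n+a x_{n+1}}{n+a}\big)\,d\tilde\mu_x^T(x_1)\cdots d\tilde\mu_x^T(x_n)\,d\mu_n(x_{n+1})$. $\|\cdot\|_2$ is the Euclidean norm, $e_2(x)=\|x\|_2^2$, $d_x(y)=\|y-x\|_2$, and $\omega(f,\delta)=\sup\{|f(x)-f(y)|:x,y\in K,\ \|x-y\|_2\le\delta\}$. *)

theory Defs
  imports "HOL-Probability.Probability"
begin

text \<open>Markov operator on C(K), represented on functions 'a => real, all conditions relativised to K.\<close>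
definition markov_operator :: "'a::euclidean_space set \<Rightarrow> (('a \<Rightarrow> real) \<Rightarrow> ('a \<Rightarrow> real)) \<Rightarrow> bool" where
  "markov_operator K T \<longleftrightarrow>
     (\<forall>f. continuous_on K f \<longrightarrow> continuous_on K (T f)) \<and>
     (\<forall>f g. continuous_on K f \<longrightarrow> continuous_on K g \<longrightarrow>
        (\<forall>x\<in>K. T (\<lambda>y. f y + g y) x = T f x + T g x)) \<and>
     (\<forall>f c. continuous_on K f \<longrightarrow> (\<forall>x\<in>K. T (\<lambda>y. c * f y) x = c * T f x)) \<and>
     (\<forall>f. continuous_on K f \<longrightarrow> (\<forall>x\<in>K. f x \<ge> 0) \<longrightarrow> (\<forall>x\<in>K. T f x \<ge> 0)) \<and>
     (\<forall>x\<in>K. T (\<lambda>_. 1) x = 1)"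

definition borel_prob_on :: "'a::euclidean_space set \<Rightarrow> 'a measure \<Rightarrow> bool" where
  "borel_prob_on K M \<longleftrightarrow> prob_space M \<and> sets M = sets (restrict_space borel K)"

definition modulus :: "'a::euclidean_space set \<Rightarrow> ('a \<Rightarrow> real) \<Rightarrow> real \<Rightarrow> real" where
  "modulus K f \<delta> = Sup {\<bar>f x - f y\<bar> | x y. x \<in> K \<and> y \<in> K \<and> norm (x - y) \<le> \<delta>}"

definition C_op :: "('a::euclidean_space \<Rightarrow> 'a measure) \<Rightarrow> 'a measure \<Rightarrow> real \<Rightarrow> nat \<Rightarrow> ('a \<Rightarrow> real) \<Rightarrow> 'a \<Rightarrow> real" where
  "C_op nu mu a n f x =
     integral\<^sup>L (Pi\<^sub>M {..<n} (\<lambda>_. nu x) \<Otimes>\<^sub>M mu)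
       (\<lambda>(xs, y). f (((\<Sum>i<n. xs i) + a *\<^sub>R y) /\<^sub>R (real n + a)))"

definition e2 :: "'a::euclidean_space \<Rightarrow> real" where
  "e2 x = (norm x)\<^sup>2"

end

theory Submission
  imports Defs
begin

(* C_n(f)(x) is the expectation of f at the weighted mean of n independent points drawn from
   the kernel measure at x and one point drawn from mu_n. Because T fixes affine functions, the
   kernel measure at x has barycentre x and second moment T(e2)(x) - e2(x) about x; by
   independence the weighted mean then has second moment
   (a^2 * int d_x^2 d mu_n + n (T(e2)(x) - e2(x))) / (n + a)^2 about x.
   On a convex set |f u - f v| <= (1 + |u - v|^2 / delta^2) omega(f, delta); integrating this
   against the law of the weighted mean, with delta^2 equal to its second moment, gives the
   pointwise bound with the factor 2. The uniform bound follows by estimating both moments. *)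

lemma finite_measure_integrable_bounded:
  fixes g :: "_ \<Rightarrow> real"
  assumes "finite_measure M" "g \<in> borel_measurable M" "\<And>x. x \<in> space M \<Longrightarrow> \<bar>g x\<bar> \<le> B"
  shows "integrable M g"
  by (rule finite_measure.integrable_const_bound[OF assms(1), where B=B]) (auto intro!: AE_I2 assms)

lemma norm_diff_le_diameter:
  fixes x y :: "'a::real_normed_vector"
  assumes "bounded K" "x \<in> K" "y \<in> K"
  shows "norm (x - y) \<le> diameter K"
  using diameter_bounded_bound[OF assms] by (simp add: dist_norm)

lemma (in prob_space) integral_norm_add_sq_mean_zero:
  fixes W :: "'a \<Rightarrow> 'b::euclidean_space"
  assumes inner_int: "\<And>c. integrable M (\<lambda>y. inner c (W y))"
    and inner_zero: "\<And>c. (\<integral>y. inner c (W y) \<partial>M) = 0"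
    and sq_int: "integrable M (\<lambda>y. (norm (W y))\<^sup>2)"
  shows "(\<integral>y. (norm (c + W y))\<^sup>2 \<partial>M) = (norm c)\<^sup>2 + (\<integral>y. (norm (W y))\<^sup>2 \<partial>M)"
proof -
  have "(norm (c + W y))\<^sup>2 = (norm c)\<^sup>2 + (inner (2 *\<^sub>R c) (W y) + (norm (W y))\<^sup>2)" for y
    by (simp add: power2_norm_eq_inner inner_add_left inner_add_right inner_commute algebra_simps)
  then have "(\<integral>y. (norm (c + W y))\<^sup>2 \<partial>M)
      = (\<integral>y. (norm c)\<^sup>2 \<partial>M) + ((\<integral>y. inner (2 *\<^sub>R c) (W y) \<partial>M) + (\<integral>y. (norm (W y))\<^sup>2 \<partial>M))"
    using inner_int[of "2 *\<^sub>R c"] sq_int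
    by (simp del: inner_scaleR_left add: Bochner_Integration.integral_add)
  then show ?thesis
    using inner_zero[of "2 *\<^sub>R c"] by (simp del: inner_scaleR_left add: prob_space)
qed

lemma space_borel_prob_on:
  assumes "borel_prob_on K M"
  shows "space M = K"
proof -
  have "space M = space (restrict_space borel K)"
    using assms unfolding borel_prob_on_def by (intro sets_eq_imp_space_eq) simp
  then show ?thesis
    by (simp add: space_restrict_space)
qed

lemma prob_space_borel_prob_on: "borel_prob_on K M \<Longrightarrow> prob_space M"
  unfolding borel_prob_on_def by simp

lemma borel_measurable_borel_prob_on:
  assumes "borel_prob_on K M" "continuous_on K g"
  shows "g \<in> borel_measurable M"
proof -
  have "sets M = sets (restrict_space borel K)"
    using assms(1) unfolding borel_prob_on_def by simp
  then show ?thesis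
    using borel_measurable_continuous_on_restrict[OF assms(2)] measurable_cong_sets by blast
qed

lemma integrable_borel_prob_on:
  fixes g :: "'a::euclidean_space \<Rightarrow> real"
  assumes M: "borel_prob_on K M" and "compact K" "continuous_on K g"
  shows "integrable M g"
proof -
  have "bounded (g ` K)"
    using assms compact_continuous_image compact_imp_bounded by blast
  then obtain B where "\<And>t. t \<in> K \<Longrightarrow> \<bar>g t\<bar> \<le> B"
    unfolding bounded_iff by auto
  then show ?thesis
    using assms prob_space.finite_measure[OF prob_space_borel_prob_on[OF M]]
    by (intro finite_measure_integrable_bounded[where B=B] borel_measurable_borel_prob_on)
       (auto simp: space_borel_prob_on[OF M])
qed

lemma integral_sq_dist_le_diameter:
  fixes x :: "'a::euclidean_space"
  assumes M: "borel_prob_on K M" and K: "compact K" and x: "x \<in> K"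
  shows "(\<integral>y. (norm (y - x))\<^sup>2 \<partial>M) \<le> (diameter K)\<^sup>2"
proof -
  interpret prob_space M by (rule prob_space_borel_prob_on[OF M])
  have "(\<integral>y. (norm (y - x))\<^sup>2 \<partial>M) \<le> (\<integral>y. (diameter K)\<^sup>2 \<partial>M)"
  proof (rule integral_mono)
    show "integrable M (\<lambda>y. (norm (y - x))\<^sup>2)"
      by (rule integrable_borel_prob_on[OF M K]) (intro continuous_intros)
    fix y assume "y \<in> space M"
    then show "(norm (y - x))\<^sup>2 \<le> (diameter K)\<^sup>2"
      using norm_diff_le_diameter[OF compact_imp_bounded[OF K] _ x]
      by (simp add: space_borel_prob_on[OF M] power_mono)
  qed simp
  then show ?thesis by (simp add: prob_space)
qed

subsection \<open>The modulus of continuity\<close>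

lemma obtain_nat_between_sq:
  fixes l :: real
  assumes "0 \<le> l"
  obtains m :: nat where "0 < m" "l \<le> real m" "real m \<le> 1 + l\<^sup>2"
proof (cases "l \<le> 1")
  case True
  then show ?thesis
    using assms by (intro that[of 1]) auto
next
  case False
  have "l \<le> real (nat \<lceil>l\<rceil>)" "real (nat \<lceil>l\<rceil>) \<le> l + 1"
    using real_nat_ceiling_ge[of l] of_int_ceiling_le_add_one[of l] False by auto
  moreover have "l \<le> l\<^sup>2"
    using False by (simp add: power2_eq_square)
  ultimately show ?thesis
    using False by (intro that[of "nat \<lceil>l\<rceil>"]) linarith+
qed

context
  fixes K :: "'a::euclidean_space set" and f :: "'a \<Rightarrow> real"
  assumes K: "compact K" and f: "continuous_on K f"
begin

lemma bdd_above_modulus_set: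
  "bdd_above {\<bar>f x - f y\<bar> | x y. x \<in> K \<and> y \<in> K \<and> norm (x - y) \<le> d}"
proof -
  have "bounded (f ` K)"
    using K f compact_continuous_image compact_imp_bounded by blast
  then obtain B where "\<And>t. t \<in> K \<Longrightarrow> \<bar>f t\<bar> \<le> B"
    unfolding bounded_iff by auto
  then have "\<And>x y. x \<in> K \<Longrightarrow> y \<in> K \<Longrightarrow> \<bar>f x - f y\<bar> \<le> 2 * B"
    by (smt (verit))
  then show ?thesis
    unfolding bdd_above_def by blast
qed

lemma abs_diff_le_modulus:
  "x \<in> K \<Longrightarrow> y \<in> K \<Longrightarrow> norm (x - y) \<le> d \<Longrightarrow> \<bar>f x - f y\<bar> \<le> modulus K f d"
  unfolding modulus_def by (rule cSup_upper[OF _ bdd_above_modulus_set]) blast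

lemma modulus_nonneg: "K \<noteq> {} \<Longrightarrow> 0 \<le> d \<Longrightarrow> 0 \<le> modulus K f d"
  using abs_diff_le_modulus by fastforce

lemma modulus_mono:
  assumes "K \<noteq> {}" "0 \<le> d" "d \<le> d'"
  shows "modulus K f d \<le> modulus K f d'"
  unfolding modulus_def
proof (rule cSup_subset_mono[OF _ bdd_above_modulus_set])
  show "{\<bar>f x - f y\<bar> | x y. x \<in> K \<and> y \<in> K \<and> norm (x - y) \<le> d} \<noteq> {}"
    using assms by fastforce
  show "{\<bar>f x - f y\<bar> | x y. x \<in> K \<and> y \<in> K \<and> norm (x - y) \<le> d}
      \<subseteq> {\<bar>f x - f y\<bar> | x y. x \<in> K \<and> y \<in> K \<and> norm (x - y) \<le> d'}"
    using assms(3) by fastforce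
qed

lemma abs_diff_le_of_nat_mult_modulus:
  assumes "convex K" and u: "u \<in> K" and v: "v \<in> K" and m: "m > 0" and uv: "norm (u - v) \<le> real m * d"
  shows "\<bar>f u - f v\<bar> \<le> real m * modulus K f d"
proof -
  define p where "p k = u + (real k / real m) *\<^sub>R (v - u)" for k
  have p_in: "p k \<in> K" if "k \<le> m" for k
  proof -
    have "(1 - real k / real m) *\<^sub>R u + (real k / real m) *\<^sub>R v \<in> K"
      using that m by (intro convexD[OF \<open>convex K\<close> u v]) auto
    then show ?thesis
      unfolding p_def by (simp add: algebra_simps)
  qed
  have p_step: "norm (p k - p (Suc k)) \<le> d" for k
  proof -
    have "real (Suc k) / real m = real k / real m + 1 / real m"
      by (simp add: add_divide_distrib)
    then have "p k - p (Suc k) = - ((1 / real m) *\<^sub>R (v - u))"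
      unfolding p_def by (simp add: scaleR_add_left)
    then have "norm (p k - p (Suc k)) = norm (u - v) / real m"
      by (simp add: norm_minus_commute)
    also have "\<dots> \<le> d"
      using uv m by (simp add: divide_le_eq mult.commute)
    finally show ?thesis .
  qed
  have "p 0 = u" "p m = v"
    unfolding p_def using m by auto
  then have "f u - f v = (\<Sum>k<m. f (p k) - f (p (Suc k)))"
    by (subst sum_lessThan_telescope') simp
  then have "\<bar>f u - f v\<bar> \<le> (\<Sum>k<m. \<bar>f (p k) - f (p (Suc k))\<bar>)"
    by (simp add: sum_abs)
  also have "\<dots> \<le> (\<Sum>k<m. modulus K f d)"
    by (intro sum_mono abs_diff_le_modulus p_in p_step) auto
  finally show ?thesis by simp
qed

lemma abs_diff_le_modulus_quadratic:
  assumes "convex K" and u: "u \<in> K" and v: "v \<in> K" and d: "d > 0"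
  shows "\<bar>f u - f v\<bar> \<le> (1 + (norm (u - v))\<^sup>2 / d\<^sup>2) * modulus K f d"
proof -
  define l where "l = norm (u - v) / d"
  have "0 \<le> l"
    using d unfolding l_def by simp
  then obtain m where m: "0 < m" "l \<le> real m" "real m \<le> 1 + l\<^sup>2"
    by (rule obtain_nat_between_sq)
  have "norm (u - v) \<le> real m * d"
    using m(2) d unfolding l_def by (simp add: divide_le_eq)
  then have "\<bar>f u - f v\<bar> \<le> real m * modulus K f d"
    by (rule abs_diff_le_of_nat_mult_modulus[OF \<open>convex K\<close> u v m(1)])
  also have "\<dots> \<le> (1 + l\<^sup>2) * modulus K f d"
  proof (rule mult_right_mono)
    show "0 \<le> modulus K f d"
      using u d by (intro modulus_nonneg) auto
  qed (rule m(3))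
  also have "1 + l\<^sup>2 = 1 + (norm (u - v))\<^sup>2 / d\<^sup>2"
    unfolding l_def by (simp add: power_divide)
  finally show ?thesis .
qed

lemma integrable_comp_in_compact:
  assumes "finite_measure Q" and Z_meas: "Z \<in> borel_measurable Q"
    and Z_in: "\<And>\<omega>. \<omega> \<in> space Q \<Longrightarrow> Z \<omega> \<in> K"
  shows "integrable Q (\<lambda>\<omega>. f (Z \<omega>))"
proof -
  have "Z \<in> measurable Q (restrict_space borel K)"
    using Z_meas Z_in by (intro measurable_restrict_space2) auto
  then have "(\<lambda>\<omega>. f (Z \<omega>)) \<in> borel_measurable Q"
    using measurable_compose borel_measurable_continuous_on_restrict[OF f] by blast
  moreover obtain B where "\<And>t. t \<in> K \<Longrightarrow> \<bar>f t\<bar> \<le> B"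
    using compact_imp_bounded[OF compact_continuous_image[OF f K]] unfolding bounded_iff by auto
  ultimately show ?thesis
    using assms by (intro finite_measure_integrable_bounded) auto
qed

lemma integral_abs_comp_diff_le_modulus:
  assumes "convex K" and Q: "prob_space Q" and x: "x \<in> K" and d: "d > 0"
    and Z_meas: "Z \<in> borel_measurable Q" and Z_in: "\<And>\<omega>. \<omega> \<in> space Q \<Longrightarrow> Z \<omega> \<in> K"
    and Z_sq: "integrable Q (\<lambda>\<omega>. (norm (Z \<omega> - x))\<^sup>2)"
  shows "(\<integral>\<omega>. \<bar>f (Z \<omega>) - f x\<bar> \<partial>Q) \<le> (1 + (\<integral>\<omega>. (norm (Z \<omega> - x))\<^sup>2 \<partial>Q) / d\<^sup>2) * modulus K f d"
proof -
  interpret prob_space Q by (rule Q)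
  define w where "w = modulus K f d"
  have "(\<integral>\<omega>. \<bar>f (Z \<omega>) - f x\<bar> \<partial>Q) \<le> (\<integral>\<omega>. w + (w / d\<^sup>2) * (norm (Z \<omega> - x))\<^sup>2 \<partial>Q)"
  proof (rule integral_mono)
    show "integrable Q (\<lambda>\<omega>. \<bar>f (Z \<omega>) - f x\<bar>)"
      using integrable_comp_in_compact[OF finite_measure_axioms Z_meas Z_in] by auto
    fix \<omega> assume "\<omega> \<in> space Q"
    then show "\<bar>f (Z \<omega>) - f x\<bar> \<le> w + (w / d\<^sup>2) * (norm (Z \<omega> - x))\<^sup>2"
      using abs_diff_le_modulus_quadratic[OF \<open>convex K\<close> Z_in x d]
      unfolding w_def by (simp add: algebra_simps)
  qed (use Z_sq in auto)
  also have "\<dots> = (1 + (\<integral>\<omega>. (norm (Z \<omega> - x))\<^sup>2 \<partial>Q) / d\<^sup>2) * w"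
    using Z_sq by (simp add: prob_space algebra_simps)
  finally show ?thesis
    unfolding w_def .
qed

text \<open>The factor 2 comes from choosing \<open>d\<^sup>2\<close> equal to the second moment of \<open>Z\<close> about \<open>x\<close>.\<close>

lemma abs_integral_comp_diff_le_modulus:
  assumes "convex K" and Q: "prob_space Q" and x: "x \<in> K"
    and Z_meas: "Z \<in> borel_measurable Q" and Z_in: "\<And>\<omega>. \<omega> \<in> space Q \<Longrightarrow> Z \<omega> \<in> K"
    and Z_sq: "integrable Q (\<lambda>\<omega>. (norm (Z \<omega> - x))\<^sup>2)"
  shows "\<bar>(\<integral>\<omega>. f (Z \<omega>) \<partial>Q) - f x\<bar> \<le> 2 * modulus K f (sqrt (\<integral>\<omega>. (norm (Z \<omega> - x))\<^sup>2 \<partial>Q))"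
proof -
  interpret prob_space Q by (rule Q)
  define E where "E = (\<integral>\<omega>. (norm (Z \<omega> - x))\<^sup>2 \<partial>Q)"
  have "\<bar>(\<integral>\<omega>. f (Z \<omega>) \<partial>Q) - f x\<bar> = \<bar>\<integral>\<omega>. f (Z \<omega>) - f x \<partial>Q\<bar>"
    using integrable_comp_in_compact[OF finite_measure_axioms Z_meas Z_in]
    by (simp add: Bochner_Integration.integral_diff prob_space)
  also have "\<dots> \<le> (\<integral>\<omega>. \<bar>f (Z \<omega>) - f x\<bar> \<partial>Q)"
    by (rule integral_abs_bound)
  also have "\<dots> \<le> 2 * modulus K f (sqrt E)"
  proof (cases "E = 0")
    case True
    then have "AE \<omega> in Q. Z \<omega> = x"
      using integral_nonneg_eq_0_iff_AE[OF Z_sq] unfolding E_def by simp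
    then have "(\<integral>\<omega>. \<bar>f (Z \<omega>) - f x\<bar> \<partial>Q) = 0"
      by (intro integral_eq_zero_AE) (auto elim: eventually_mono)
    then show ?thesis
      using modulus_nonneg[of 0] x True by auto
  next
    case False
    then have "sqrt E > 0" and "(sqrt E)\<^sup>2 = E"
      unfolding E_def by (auto simp: less_le)
    then show ?thesis
      using integral_abs_comp_diff_le_modulus[OF \<open>convex K\<close> Q x _ Z_meas Z_in Z_sq, of "sqrt E"] False
      unfolding E_def by simp
  qed
  finally show ?thesis
    unfolding E_def .
qed
end

subsection \<open>Sums of independent centred random vectors\<close>

locale centred_bounded_prob = prob_space M for M :: "'a::euclidean_space measure" +
  fixes x0 :: 'a and D :: real
  assumes measurable_id[measurable]: "(\<lambda>t. t) \<in> borel_measurable M"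
    and norm_centred_le: "\<And>t. t \<in> space M \<Longrightarrow> norm (t - x0) \<le> D"
    and integral_inner_centred: "\<And>c. (\<integral>t. inner c (t - x0) \<partial>M) = 0"
begin

lemma integrable_inner_centred: "integrable M (\<lambda>t. inner c (t - x0))"
proof (rule finite_measure_integrable_bounded[where B="norm c * D"])
  fix t assume "t \<in> space M"
  then show "\<bar>inner c (t - x0)\<bar> \<le> norm c * D"
    using Cauchy_Schwarz_ineq2[of c "t - x0"] norm_centred_le
    by (meson mult_left_mono norm_ge_zero order_trans)
qed (auto simp: finite_measure_axioms)

lemma integrable_norm_centred_sq: "integrable M (\<lambda>t. (norm (t - x0))\<^sup>2)"
  using norm_centred_le
  by (intro finite_measure_integrable_bounded[where B="D\<^sup>2"]) (auto simp: finite_measure_axioms power_mono)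

lemma prob_space_PiM_copies: "prob_space (PiM I (\<lambda>_. M))"
  by (intro prob_space_PiM prob_space_axioms)

lemma norm_sum_centred_le:
  assumes "xs \<in> space (PiM {..<n} (\<lambda>_. M))"
  shows "norm (\<Sum>k<n. xs k - x0) \<le> real n * D"
proof -
  have "norm (\<Sum>k<n. xs k - x0) \<le> (\<Sum>k<n. norm (xs k - x0))"
    by (rule norm_sum)
  also have "\<dots> \<le> (\<Sum>k<n. D)"
    using assms by (intro sum_mono norm_centred_le) (auto simp: space_PiM)
  finally show ?thesis by simp
qed

lemma integrable_norm_sum_centred_sq:
  fixes n :: nat
  shows "integrable (PiM {..<n} (\<lambda>_. M)) (\<lambda>xs. (norm (\<Sum>k<n. xs k - x0))\<^sup>2)"
proof (rule finite_measure_integrable_bounded[where B="(real n * D)\<^sup>2"])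
  show "finite_measure (PiM {..<n} (\<lambda>_. M))"
    by (intro prob_space.finite_measure prob_space_PiM_copies)
  fix xs assume "xs \<in> space (PiM {..<n} (\<lambda>_. M))"
  then show "\<bar>(norm (\<Sum>k<n. xs k - x0))\<^sup>2\<bar> \<le> (real n * D)\<^sup>2"
    using norm_sum_centred_le by (simp add: power_mono)
qed simp

lemma
  fixes n :: nat
  shows integrable_inner_sum_centred:
      "integrable (PiM {..<n} (\<lambda>_. M)) (\<lambda>xs. inner c (\<Sum>k<n. xs k - x0))"
    and integral_inner_sum_centred:
      "(\<integral>xs. inner c (\<Sum>k<n. xs k - x0) \<partial>PiM {..<n} (\<lambda>_. M)) = 0"
proof -
  have component: "distr (PiM {..<n} (\<lambda>_. M)) M (\<lambda>xs. xs k) = M"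
    and component_meas: "(\<lambda>xs. xs k) \<in> measurable (PiM {..<n} (\<lambda>_. M)) M" if "k < n" for k
    using that distr_PiM_component[of "{..<n}" "\<lambda>_. M" k] prob_space_axioms
      measurable_component_singleton[of k "{..<n}" "\<lambda>_. M"] by auto
  have int: "integrable (PiM {..<n} (\<lambda>_. M)) (\<lambda>xs. inner c (xs k - x0))" if "k < n" for k
    using integrable_distr_eq[OF component_meas[OF that], of "\<lambda>t. inner c (t - x0)"]
      integrable_inner_centred component[OF that] by simp
  have zero: "(\<integral>xs. inner c (xs k - x0) \<partial>PiM {..<n} (\<lambda>_. M)) = 0" if "k < n" for k
    using integral_distr[OF component_meas[OF that], of "\<lambda>t. inner c (t - x0)"]
      integral_inner_centred component[OF that] by simp
  show "integrable (PiM {..<n} (\<lambda>_. M)) (\<lambda>xs. inner c (\<Sum>k<n. xs k - x0))"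
    unfolding inner_sum_right using int by auto
  show "(\<integral>xs. inner c (\<Sum>k<n. xs k - x0) \<partial>PiM {..<n} (\<lambda>_. M)) = 0"
    unfolding inner_sum_right using int zero by (subst Bochner_Integration.integral_sum) auto
qed

lemma integral_norm_sum_centred_sq:
  "(\<integral>xs. (norm (\<Sum>k<n. xs k - x0))\<^sup>2 \<partial>PiM {..<n} (\<lambda>_. M)) = real n * (\<integral>t. (norm (t - x0))\<^sup>2 \<partial>M)"
proof (induction n)
  case 0
  then show ?case by simp
next
  case (Suc n)
  interpret product_sigma_finite "\<lambda>_::nat. M"
    unfolding product_sigma_finite_def by (auto intro: prob_space_imp_sigma_finite prob_space_axioms)
  interpret P: prob_space "PiM {..<n} (\<lambda>_. M)"
    by (rule prob_space_PiM_copies)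
  define V where "V = (\<integral>t. (norm (t - x0))\<^sup>2 \<partial>M)"
  have "(\<integral>xs. (norm (\<Sum>k<Suc n. xs k - x0))\<^sup>2 \<partial>PiM (insert n {..<n}) (\<lambda>_. M))
      = (\<integral>xs. (\<integral>y. (norm ((\<Sum>k<n. xs k - x0) + (y - x0)))\<^sup>2 \<partial>M) \<partial>PiM {..<n} (\<lambda>_. M))"
    using integrable_norm_sum_centred_sq[of "Suc n"]
    by (subst product_integral_insert) (simp_all add: lessThan_Suc add.commute)
  also have "\<dots> = (\<integral>xs. (norm (\<Sum>k<n. xs k - x0))\<^sup>2 + V \<partial>PiM {..<n} (\<lambda>_. M))"
    unfolding V_def
    by (intro Bochner_Integration.integral_cong refl integral_norm_add_sq_mean_zero
        integrable_inner_centred integral_inner_centred integrable_norm_centred_sq)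
  also have "\<dots> = real n * V + V"
    using integrable_norm_sum_centred_sq[of n] Suc.IH
    by (simp add: V_def P.prob_space)
  finally show ?case
    by (simp add: lessThan_Suc V_def algebra_simps)
qed

end

definition weighted_mean :: "real \<Rightarrow> nat \<Rightarrow> (nat \<Rightarrow> 'a) \<times> 'a \<Rightarrow> 'a::real_vector" where
  "weighted_mean a n = (\<lambda>(xs, y). ((\<Sum>i<n. xs i) + a *\<^sub>R y) /\<^sub>R (real n + a))"

lemma C_op_eq_integral_weighted_mean:
  "C_op nu M a n f x = (\<integral>\<omega>. f (weighted_mean a n \<omega>) \<partial>(PiM {..<n} (\<lambda>_. nu x) \<Otimes>\<^sub>M M))"
  unfolding C_op_def weighted_mean_def by (simp add: case_prod_beta')

lemma weighted_mean_in_convex: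
  fixes K :: "'a::real_vector set"
  assumes K: "convex K" and n: "n \<ge> 1" and a: "a \<ge> 0"
    and xs: "\<And>k. k < n \<Longrightarrow> xs k \<in> K" and y: "y \<in> K"
  shows "weighted_mean a n (xs, y) \<in> K"
proof -
  have pos: "real n + a > 0"
    using n a by linarith
  have "(\<Sum>i<n. (1 / real n) *\<^sub>R xs i) \<in> K"
    using n xs by (intro convex_sum[OF _ K]) auto
  then have "(real n / (real n + a)) *\<^sub>R (\<Sum>i<n. (1 / real n) *\<^sub>R xs i) + (a / (real n + a)) *\<^sub>R y \<in> K"
    using pos a by (intro convexD[OF K _ y]) (auto simp: add_divide_distrib[symmetric])
  moreover have "(real n / (real n + a)) *\<^sub>R (\<Sum>i<n. (1 / real n) *\<^sub>R xs i) + (a / (real n + a)) *\<^sub>R y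
      = weighted_mean a n (xs, y)"
    using n unfolding weighted_mean_def
    by (simp add: scaleR_sum_right[symmetric] scaleR_add_right divide_inverse_commute)
  ultimately show ?thesis by simp
qed

lemma weighted_mean_in_convex_space:
  fixes K :: "'a::real_vector set"
  assumes "convex K" "n \<ge> 1" "a \<ge> 0" "space N = K" "space L = K"
    and "\<omega> \<in> space (PiM {..<n} (\<lambda>_. N) \<Otimes>\<^sub>M L)"
  shows "weighted_mean a n \<omega> \<in> K"
proof (cases \<omega>)
  case (Pair xs y)
  then have "xs \<in> {..<n} \<rightarrow>\<^sub>E K" "y \<in> K"
    using assms(4-6) by (simp_all add: space_pair_measure space_PiM)
  then show ?thesis
    unfolding Pair using assms(1-3) by (intro weighted_mean_in_convex) auto
qed

lemma weighted_mean_minus: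
  assumes "real n + a \<noteq> 0"
  shows "weighted_mean a n (xs, y) - x0 = ((\<Sum>k<n. xs k - x0) + a *\<^sub>R (y - x0)) /\<^sub>R (real n + a)"
proof -
  have "(\<Sum>k<n. xs k - x0) + a *\<^sub>R (y - x0) = ((\<Sum>i<n. xs i) + a *\<^sub>R y) - (real n + a) *\<^sub>R x0"
    by (simp add: sum_subtractf scaleR_diff_right scaleR_add_left sum_constant_scaleR)
  moreover have "weighted_mean a n (xs, y) - x0 = (((\<Sum>i<n. xs i) + a *\<^sub>R y) - (real n + a) *\<^sub>R x0) /\<^sub>R (real n + a)"
    unfolding weighted_mean_def by (simp only: case_prod_conv scaleR_diff_right scaleR_scaleR) (simp add: assms)
  ultimately show ?thesis
    by simp
qed

lemma measurable_weighted_mean: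
  fixes N L :: "'a::euclidean_space measure"
  assumes "(\<lambda>t. t) \<in> borel_measurable N" "(\<lambda>t. t) \<in> borel_measurable L"
  shows "weighted_mean a n \<in> borel_measurable (PiM {..<n} (\<lambda>_. N) \<Otimes>\<^sub>M L)"
proof -
  have "(\<lambda>\<omega>. fst \<omega> i) \<in> PiM {..<n} (\<lambda>_. N) \<Otimes>\<^sub>M L \<rightarrow>\<^sub>M N" if "i < n" for i
    using measurable_compose[OF measurable_fst measurable_component_singleton[of i "{..<n}" "\<lambda>_. N"]]
      that by simp
  then have "(\<lambda>\<omega>. fst \<omega> i) \<in> borel_measurable (PiM {..<n} (\<lambda>_. N) \<Otimes>\<^sub>M L)" if "i < n" for i
    using measurable_compose[OF _ assms(1)] that by blast
  moreover have "snd \<in> borel_measurable (PiM {..<n} (\<lambda>_. N) \<Otimes>\<^sub>M L)"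
    by (rule measurable_compose[OF measurable_snd assms(2)])
  ultimately show ?thesis
    unfolding weighted_mean_def case_prod_beta
    by (intro borel_measurable_scaleR borel_measurable_add borel_measurable_sum borel_measurable_const) auto
qed

lemma (in centred_bounded_prob) integral_norm_add_sum_centred_sq:
  assumes L: "prob_space L" and [measurable]: "(\<lambda>t. t) \<in> borel_measurable L"
    and L_le: "\<And>y. y \<in> space L \<Longrightarrow> norm (y - x0) \<le> D"
  shows "integrable (PiM {..<n} (\<lambda>_. M) \<Otimes>\<^sub>M L)
      (\<lambda>\<omega>. (norm (a *\<^sub>R (snd \<omega> - x0) + (\<Sum>k<n. fst \<omega> k - x0)))\<^sup>2)" (is "integrable _ ?H")
    and "(\<integral>\<omega>. (norm (a *\<^sub>R (snd \<omega> - x0) + (\<Sum>k<n. fst \<omega> k - x0)))\<^sup>2 \<partial>(PiM {..<n} (\<lambda>_. M) \<Otimes>\<^sub>M L))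
      = a\<^sup>2 * (\<integral>y. (norm (y - x0))\<^sup>2 \<partial>L) + real n * (\<integral>t. (norm (t - x0))\<^sup>2 \<partial>M)"
proof -
  let ?P = "PiM {..<n} (\<lambda>_. M)"
  define H where "H = ?H"
  interpret L: prob_space L by (rule L)
  interpret P: prob_space ?P by (rule prob_space_PiM_copies)
  interpret pair_sigma_finite ?P L
    by (intro pair_sigma_finite.intro prob_space_imp_sigma_finite P.prob_space_axioms L)
  interpret Q: prob_space "?P \<Otimes>\<^sub>M L"
    by (intro prob_space_pair P.prob_space_axioms L)
  have H_int: "integrable (?P \<Otimes>\<^sub>M L) H"
  proof (rule finite_measure_integrable_bounded[where B="(\<bar>a\<bar> * D + real n * D)\<^sup>2"])
    fix \<omega> assume \<omega>: "\<omega> \<in> space (?P \<Otimes>\<^sub>M L)"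
    have "norm (a *\<^sub>R (snd \<omega> - x0)) \<le> \<bar>a\<bar> * D"
      using \<omega> L_le by (auto simp: space_pair_measure intro: mult_left_mono)
    moreover have "norm (\<Sum>k<n. fst \<omega> k - x0) \<le> real n * D"
      using \<omega> norm_sum_centred_le by (auto simp: space_pair_measure)
    ultimately have "norm (a *\<^sub>R (snd \<omega> - x0) + (\<Sum>k<n. fst \<omega> k - x0)) \<le> \<bar>a\<bar> * D + real n * D"
      by (intro norm_triangle_le) linarith
    then show "\<bar>H \<omega>\<bar> \<le> (\<bar>a\<bar> * D + real n * D)\<^sup>2"
      unfolding H_def by (simp add: power_mono)
  qed (auto simp: H_def Q.finite_measure_axioms)
  then show "integrable (?P \<Otimes>\<^sub>M L) ?H"
    unfolding H_def .
  have "integral\<^sup>L (?P \<Otimes>\<^sub>M L) H = (\<integral>y. (\<integral>xs. H (xs, y) \<partial>?P) \<partial>L)"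
    using H_int by (rule integral_snd[symmetric, where f="\<lambda>xs y. H (xs, y)", simplified])
  also have "\<dots> = (\<integral>y. a\<^sup>2 * (norm (y - x0))\<^sup>2 + real n * (\<integral>t. (norm (t - x0))\<^sup>2 \<partial>M) \<partial>L)"
    unfolding H_def
    by (intro Bochner_Integration.integral_cong refl)
      (simp add: P.integral_norm_add_sq_mean_zero integrable_inner_sum_centred integral_inner_sum_centred
        integrable_norm_sum_centred_sq integral_norm_sum_centred_sq power_mult_distrib)
  also have "\<dots> = a\<^sup>2 * (\<integral>y. (norm (y - x0))\<^sup>2 \<partial>L) + real n * (\<integral>t. (norm (t - x0))\<^sup>2 \<partial>M)"
  proof -
    have "integrable L (\<lambda>y. (norm (y - x0))\<^sup>2)"
      using L_le by (intro finite_measure_integrable_bounded[where B="D\<^sup>2"])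
        (auto simp: L.finite_measure_axioms power_mono)
    then show ?thesis by (simp add: L.prob_space)
  qed
  finally show "integral\<^sup>L (?P \<Otimes>\<^sub>M L) ?H
      = a\<^sup>2 * (\<integral>y. (norm (y - x0))\<^sup>2 \<partial>L) + real n * (\<integral>t. (norm (t - x0))\<^sup>2 \<partial>M)"
    unfolding H_def .
qed

lemma (in centred_bounded_prob) integral_sq_dist_weighted_mean:
  assumes L: "prob_space L" "(\<lambda>t. t) \<in> borel_measurable L"
    "\<And>y. y \<in> space L \<Longrightarrow> norm (y - x0) \<le> D"
    and na: "real n + a \<noteq> 0"
  shows "integrable (PiM {..<n} (\<lambda>_. M) \<Otimes>\<^sub>M L) (\<lambda>\<omega>. (norm (weighted_mean a n \<omega> - x0))\<^sup>2)"
    and "(\<integral>\<omega>. (norm (weighted_mean a n \<omega> - x0))\<^sup>2 \<partial>(PiM {..<n} (\<lambda>_. M) \<Otimes>\<^sub>M L))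
      = (a\<^sup>2 * (\<integral>y. (norm (y - x0))\<^sup>2 \<partial>L) + real n * (\<integral>t. (norm (t - x0))\<^sup>2 \<partial>M)) / (real n + a)\<^sup>2"
proof -
  have "(norm (weighted_mean a n \<omega> - x0))\<^sup>2
      = (norm (a *\<^sub>R (snd \<omega> - x0) + (\<Sum>k<n. fst \<omega> k - x0)))\<^sup>2 / (real n + a)\<^sup>2" for \<omega>
    using na by (cases \<omega>) (simp add: weighted_mean_minus add.commute power_divide divide_inverse
        power_mult_distrib power_inverse)
  then show "integrable (PiM {..<n} (\<lambda>_. M) \<Otimes>\<^sub>M L) (\<lambda>\<omega>. (norm (weighted_mean a n \<omega> - x0))\<^sup>2)"
    and "(\<integral>\<omega>. (norm (weighted_mean a n \<omega> - x0))\<^sup>2 \<partial>(PiM {..<n} (\<lambda>_. M) \<Otimes>\<^sub>M L))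
      = (a\<^sup>2 * (\<integral>y. (norm (y - x0))\<^sup>2 \<partial>L) + real n * (\<integral>t. (norm (t - x0))\<^sup>2 \<partial>M)) / (real n + a)\<^sup>2"
    using integral_norm_add_sum_centred_sq[OF L, of n a] by simp_all
qed

lemma sqrt_weighted_variance_le:
  fixes a I V S d :: real
  assumes "0 \<le> a" "0 < real n + a" "0 \<le> I" "I \<le> d\<^sup>2" "0 \<le> V" "V \<le> S"
  shows "1 / (real n + a) * sqrt (a\<^sup>2 * I + real n * V) \<le> sqrt (max (a * d\<^sup>2) S / (real n + a))"
proof -
  have "a\<^sup>2 * I \<le> a * max (a * d\<^sup>2) S"
    using assms by (simp add: power2_eq_square mult_left_mono mult.assoc max.coboundedI1)
  moreover have "real n * V \<le> real n * max (a * d\<^sup>2) S"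
    using assms by (simp add: mult_left_mono max.coboundedI2)
  ultimately have "(a\<^sup>2 * I + real n * V) / (real n + a)\<^sup>2
      \<le> (real n + a) * max (a * d\<^sup>2) S / (real n + a)\<^sup>2"
    using assms by (intro divide_right_mono) (auto simp: algebra_simps)
  also have "\<dots> = max (a * d\<^sup>2) S / (real n + a)"
    using assms by (simp add: power2_eq_square)
  finally have "sqrt ((a\<^sup>2 * I + real n * V) / (real n + a)\<^sup>2) \<le> sqrt (max (a * d\<^sup>2) S / (real n + a))"
    by (rule real_sqrt_le_mono)
  then show ?thesis
    using assms by (simp add: real_sqrt_divide)
qed

subsection \<open>Markov operators represented by a kernel\<close>

locale markov_kernel =
  fixes K :: "'a::euclidean_space set"
    and T :: "('a \<Rightarrow> real) \<Rightarrow> ('a \<Rightarrow> real)"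
    and nu :: "'a \<Rightarrow> 'a measure"
  assumes convex: "convex K" and compact: "compact K" and nonempty: "K \<noteq> {}"
    and markov: "markov_operator K T"
    and T_affine: "\<And>b c x. x \<in> K \<Longrightarrow> T (\<lambda>y. inner b y + c) x = inner b x + c"
    and nu: "\<And>x. x \<in> K \<Longrightarrow> borel_prob_on K (nu x)"
    and integral_nu: "\<And>x f. x \<in> K \<Longrightarrow> continuous_on K f \<Longrightarrow> integral\<^sup>L (nu x) f = T f x"
begin

lemma continuous_on_e2: "continuous_on K e2"
  unfolding e2_def by (intro continuous_intros)

lemma continuous_on_T: "continuous_on K f \<Longrightarrow> continuous_on K (T f)"
  using markov unfolding markov_operator_def by blast

lemma T_add:
  "continuous_on K f \<Longrightarrow> continuous_on K g \<Longrightarrow> x \<in> K \<Longrightarrow> T (\<lambda>y. f y + g y) x = T f x + T g x"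
  using markov unfolding markov_operator_def by blast

lemma integral_nu_inner_centred:
  assumes x: "x \<in> K"
  shows "(\<integral>t. inner c (t - x) \<partial>nu x) = 0"
proof -
  have "(\<integral>t. inner c (t - x) \<partial>nu x) = T (\<lambda>t. inner c t + (- inner c x)) x"
    by (simp add: inner_diff_right integral_nu[OF x] continuous_intros)
  then show ?thesis
    using T_affine[OF x, of c "- inner c x"] by simp
qed

text \<open>\<open>(norm (t - x))\<^sup>2\<close> differs from \<open>e2 t\<close> by an affine function of \<open>t\<close>, which \<open>T\<close> fixes.\<close>

lemma integral_nu_sq_dist:
  assumes x: "x \<in> K"
  shows "(\<integral>t. (norm (t - x))\<^sup>2 \<partial>nu x) = T e2 x - e2 x"
proof -
  have "(norm (t - x))\<^sup>2 = e2 t + (inner (-2 *\<^sub>R x) t + e2 x)" for t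
    unfolding e2_def
    by (simp add: power2_norm_eq_inner inner_diff_left inner_diff_right inner_commute algebra_simps)
  then have "(\<integral>t. (norm (t - x))\<^sup>2 \<partial>nu x) = T (\<lambda>t. e2 t + (inner (-2 *\<^sub>R x) t + e2 x)) x"
    by (simp add: integral_nu[OF x] continuous_on_e2 continuous_intros del: inner_scaleR_left)
  also have "\<dots> = T e2 x + T (\<lambda>t. inner (-2 *\<^sub>R x) t + e2 x) x"
    by (intro T_add continuous_on_e2 x continuous_intros)
  also have "\<dots> = T e2 x - e2 x"
    unfolding T_affine[OF x] by (simp add: e2_def power2_norm_eq_inner)
  finally show ?thesis .
qed

lemma centred_bounded_prob_nu:
  assumes x: "x \<in> K"
  shows "centred_bounded_prob (nu x) x (diameter K)"
proof (intro centred_bounded_prob.intro centred_bounded_prob_axioms.intro)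
  show "prob_space (nu x)"
    by (rule prob_space_borel_prob_on[OF nu[OF x]])
  show "(\<lambda>t. t) \<in> borel_measurable (nu x)"
    by (rule borel_measurable_borel_prob_on[OF nu[OF x] continuous_on_id])
  show "norm (t - x) \<le> diameter K" if "t \<in> space (nu x)" for t
    using that space_borel_prob_on[OF nu[OF x]] by (intro norm_diff_le_diameter compact_imp_bounded compact x) simp_all
  show "(\<integral>t. inner c (t - x) \<partial>nu x) = 0" for c
    by (rule integral_nu_inner_centred[OF x])
qed

lemma C_op_pointwise_estimate:
  assumes f: "continuous_on K f" and n: "n \<ge> 1" and x: "x \<in> K"
    and a: "a \<ge> 0" and M: "borel_prob_on K M"
  shows "\<bar>C_op nu M a n f x - f x\<bar>
    \<le> 2 * modulus K f (1 / (real n + a) *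
          sqrt (a\<^sup>2 * integral\<^sup>L M (\<lambda>y. (norm (y - x))\<^sup>2) + real n * (T e2 x - e2 x)))"
proof -
  interpret centred_bounded_prob "nu x" x "diameter K"
    by (rule centred_bounded_prob_nu[OF x])
  let ?Q = "PiM {..<n} (\<lambda>_. nu x) \<Otimes>\<^sub>M M"
  have pos: "real n + a > 0"
    using n a by linarith
  have M_bounds: "prob_space M" "(\<lambda>t. t) \<in> borel_measurable M"
    "\<And>y. y \<in> space M \<Longrightarrow> norm (y - x) \<le> diameter K"
    using M borel_measurable_borel_prob_on[OF M continuous_on_id]
      norm_diff_le_diameter[OF compact_imp_bounded[OF compact] _ x]
    by (auto simp: prob_space_borel_prob_on space_borel_prob_on)
  have "real n + a \<noteq> 0"
    using pos by simp
  note moments = integral_sq_dist_weighted_mean[OF M_bounds this]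
  have "weighted_mean a n \<omega> \<in> K" if "\<omega> \<in> space ?Q" for \<omega>
    using that by (intro weighted_mean_in_convex_space[OF convex n a])
      (simp_all add: space_borel_prob_on nu[OF x] M)
  then have "\<bar>C_op nu M a n f x - f x\<bar>
      \<le> 2 * modulus K f (sqrt (\<integral>\<omega>. (norm (weighted_mean a n \<omega> - x))\<^sup>2 \<partial>?Q))"
    unfolding C_op_eq_integral_weighted_mean using moments(1) pos
    by (intro abs_integral_comp_diff_le_modulus[OF compact f convex _ x] measurable_weighted_mean
        prob_space_pair prob_space_PiM_copies M_bounds(1,2) measurable_id)
  also have "sqrt (\<integral>\<omega>. (norm (weighted_mean a n \<omega> - x))\<^sup>2 \<partial>?Q)
      = 1 / (real n + a) * sqrt (a\<^sup>2 * integral\<^sup>L M (\<lambda>y. (norm (y - x))\<^sup>2) + real n * (T e2 x - e2 x))"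
    using moments(2) pos by (simp add: integral_nu_sq_dist[OF x] real_sqrt_divide)
  finally show ?thesis .
qed

lemma C_op_uniform_estimate:
  assumes f: "continuous_on K f" and n: "n \<ge> 1" and a: "a \<ge> 0" and M: "borel_prob_on K M"
  shows "Sup ((\<lambda>x. \<bar>C_op nu M a n f x - f x\<bar>) ` K)
    \<le> 2 * modulus K f (sqrt (max (a * (diameter K)\<^sup>2) (Sup ((\<lambda>x. \<bar>T e2 x - e2 x\<bar>) ` K)) / (real n + a)))"
proof (rule cSup_least)
  show "(\<lambda>x. \<bar>C_op nu M a n f x - f x\<bar>) ` K \<noteq> {}"
    using nonempty by blast
  have bdd: "bdd_above ((\<lambda>x. \<bar>T e2 x - e2 x\<bar>) ` K)"
    by (intro bounded_imp_bdd_above compact_imp_bounded compact_continuous_image compact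
        continuous_intros continuous_on_e2 continuous_on_T)
  fix z assume "z \<in> (\<lambda>x. \<bar>C_op nu M a n f x - f x\<bar>) ` K"
  then obtain x where x: "x \<in> K" and z: "z = \<bar>C_op nu M a n f x - f x\<bar>"
    by blast
  have "0 \<le> (\<integral>t. (norm (t - x))\<^sup>2 \<partial>nu x)"
    by simp
  then have V: "0 \<le> T e2 x - e2 x" "T e2 x - e2 x \<le> Sup ((\<lambda>x. \<bar>T e2 x - e2 x\<bar>) ` K)"
    using integral_nu_sq_dist[OF x] cSup_upper[OF imageI[OF x] bdd] by auto
  have I: "0 \<le> integral\<^sup>L M (\<lambda>y. (norm (y - x))\<^sup>2)"
    "integral\<^sup>L M (\<lambda>y. (norm (y - x))\<^sup>2) \<le> (diameter K)\<^sup>2"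
    using integral_sq_dist_le_diameter[OF M compact x] by auto
  have "0 < real n + a"
    using n a by linarith
  then show "z \<le> 2 * modulus K f (sqrt (max (a * (diameter K)\<^sup>2)
      (Sup ((\<lambda>x. \<bar>T e2 x - e2 x\<bar>) ` K)) / (real n + a)))"
    unfolding z using I V a
    by (intro order_trans[OF C_op_pointwise_estimate[OF f n x a M]] mult_left_mono
        modulus_mono[OF compact f nonempty] sqrt_weighted_variance_le) auto
qed

end

theorem proposition3p4:
  fixes K :: "'a::euclidean_space set"
    and T :: "('a \<Rightarrow> real) \<Rightarrow> ('a \<Rightarrow> real)"
    and nu :: "'a \<Rightarrow> 'a measure"
    and mu :: "nat \<Rightarrow> 'a measure"
    and a :: real
  assumes K: "convex K" "compact K" "K \<noteq> {}"
    and T: "markov_operator K T"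
    and T_aff: "\<And>b c x. x \<in> K \<Longrightarrow> T (\<lambda>y. inner b y + c) x = inner b x + c"
    and nu: "\<And>x. x \<in> K \<Longrightarrow> borel_prob_on K (nu x)"
    and nu_T: "\<And>x f. x \<in> K \<Longrightarrow> continuous_on K f \<Longrightarrow> integral\<^sup>L (nu x) f = T f x"
    and a: "a \<ge> 0"
    and mu: "\<And>n. n \<ge> 1 \<Longrightarrow> borel_prob_on K (mu n)"
  shows "(\<forall>f n x. continuous_on K f \<longrightarrow> n \<ge> 1 \<longrightarrow> x \<in> K \<longrightarrow>
            \<bar>C_op nu (mu n) a n f x - f x\<bar>
              \<le> 2 * modulus K f (1 / (real n + a) *
                   sqrt (a\<^sup>2 * integral\<^sup>L (mu n) (\<lambda>y. (norm (y - x))\<^sup>2)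
                         + real n * (T e2 x - e2 x))))
       \<and> (\<forall>f n. continuous_on K f \<longrightarrow> n \<ge> 1 \<longrightarrow>
            Sup ((\<lambda>x. \<bar>C_op nu (mu n) a n f x - f x\<bar>) ` K)
              \<le> 2 * modulus K f (sqrt (max (a * (diameter K)\<^sup>2)
                                             (Sup ((\<lambda>x. \<bar>T e2 x - e2 x\<bar>) ` K))
                                         / (real n + a))))"
proof -
  interpret markov_kernel K T nu
    using assms by unfold_locales auto
  show ?thesis
    using C_op_pointwise_estimate[OF _ _ _ a mu] C_op_uniform_estimate[OF _ _ a mu] by blast
qed

end
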